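(* Consider the following heterogeneous treatment effects model. Let $Y$ be a real-valued outcome (with finite mean), $D\in\{0,1\}$ a binary treatment, and $Z\in\{0,1\}$, $W\in\{0,1\}$ two binary instruments. For $z\in\{0,1\}$, let $D_z\in\{0,1\}$ denote the potential treatment when $Z=z$, and for $d,z\in\{0,1\}$ let $Y_{d,z}$ denote the potential outcome when the instrument is $Z=z$ and the treatment is $d$ (potential outcomes are not indexed by $W$). The observed variables $(Y,D,Z,W)$ are generated by $D=D_1Z+D_0(1-Z)$ and $Y=Y_1D+Y_0(1-D)$, where $Y_d=Y_{d,1}Z+Y_{d,0}(1-Z)$. Define the subgroups always takers $\mathrm{AT}=\{D_1=D_0=1\}$, never takers $\mathrm{NT}=\{D_1=D_0=0\}$ and compliers $\mathrm{CP}=\{D_1=1,D_0=0\}$, and for $G\in\{\mathrm{AT},\mathrm{NT},\mathrm{CP}\}$ and $d\in\{0,1\}$ let $\rho_{G,d}=E[Y_{d,1}-Y_{d,0}\mid G]$. Assume: (i) there exist constants $\rho_1,\rho_0$ such that $\rho_{G,d}=\rho_d$ for all $G\in\{\mathrm{AT},\mathrm{NT},\mathrm{CP}\}$ and $d\in\{0,1\}$; (ii) $D_1\geq D_0$; (iii) $(Z,W)$ is independent of $Y_{d,z}$ conditional on $(D_1,D_0)$ for every $d,z\in\{0,1\}$, and $Z$ is independent of $(D_1,D_0)$ conditional on $W$; (iv) $\Pr(D_1>D_0)>0$; (v) $0<\Pr(Z=z,W=w)<1$ for all $z,w\in\{0,1\}$; (vi) for each $G\in\{\mathrm{AT},\mathrm{NT}\}$,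 $\Pr(G\mid W=1)\Pr(\mathrm{CP}\mid W=0)\neq \Pr(G\mid W=0)\Pr(\mathrm{CP}\mid W=1)$. Then the direct effects $(\rho_1,\rho_0)$ and the local average treatment effect $\mathrm{LATE}=E[Y_1-Y_0\mid \mathrm{CP}]$ are point identified, i.e., they are uniquely determined by the joint distribution of the observed variables $(Y,D,Z,W)$.
   Context: $\Pr(G\mid W=w)$ denotes the probability that $(D_1,D_0)$ belongs to subgroup $G$ conditional on $W=w$. "Point identified" means that any two data-generating structures satisfying all the stated assumptions and inducing the same joint distribution of $(Y,D,Z,W)$ yield the same values of $\rho_1$, $\rho_0$ and $\mathrm{LATE}$. *)

theory Defs
  imports "HOL-Probability.Probability"
begin

text \<open>Conventions. Binary variables are booleans (True = 1, False = 0).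
  Dp z is the potential treatment D_z, Yp d z is the potential outcome Y_{d,z}.\<close>

definition cexp :: "'a measure \<Rightarrow> ('a \<Rightarrow> real) \<Rightarrow> 'a set \<Rightarrow> real" where
  "cexp M X A = (\<integral>\<omega>. indicator A \<omega> * X \<omega> \<partial>M) / measure M A"

definition cprob :: "'a measure \<Rightarrow> 'a set \<Rightarrow> 'a set \<Rightarrow> real" where
  "cprob M A B = measure M (A \<inter> B) / measure M B"

definition ev :: "'a measure \<Rightarrow> ('a \<Rightarrow> bool) \<Rightarrow> 'a set" where
  "ev M P = {\<omega> \<in> space M. P \<omega>}"

definition AT :: "'a measure \<Rightarrow> (bool \<Rightarrow> 'a \<Rightarrow> bool) \<Rightarrow> 'a set" where
  "AT M Dp = ev M (\<lambda>\<omega>. Dp True \<omega> \<and> Dp False \<omega>)"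
definition NT :: "'a measure \<Rightarrow> (bool \<Rightarrow> 'a \<Rightarrow> bool) \<Rightarrow> 'a set" where
  "NT M Dp = ev M (\<lambda>\<omega>. \<not> Dp True \<omega> \<and> \<not> Dp False \<omega>)"
definition CP :: "'a measure \<Rightarrow> (bool \<Rightarrow> 'a \<Rightarrow> bool) \<Rightarrow> 'a set" where
  "CP M Dp = ev M (\<lambda>\<omega>. Dp True \<omega> \<and> \<not> Dp False \<omega>)"

definition Dobs :: "(bool \<Rightarrow> 'a \<Rightarrow> bool) \<Rightarrow> ('a \<Rightarrow> bool) \<Rightarrow> 'a \<Rightarrow> bool" where
  "Dobs Dp Z \<omega> = (if Z \<omega> then Dp True \<omega> else Dp False \<omega>)"
definition Yd :: "(bool \<Rightarrow> bool \<Rightarrow> 'a \<Rightarrow> real) \<Rightarrow> ('a \<Rightarrow> bool) \<Rightarrow> bool \<Rightarrow> 'a \<Rightarrow> real" where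
  "Yd Yp Z d \<omega> = (if Z \<omega> then Yp d True \<omega> else Yp d False \<omega>)"
definition Yobs :: "(bool \<Rightarrow> 'a \<Rightarrow> bool) \<Rightarrow> (bool \<Rightarrow> bool \<Rightarrow> 'a \<Rightarrow> real) \<Rightarrow> ('a \<Rightarrow> bool) \<Rightarrow> 'a \<Rightarrow> real" where
  "Yobs Dp Yp Z \<omega> = (if Dobs Dp Z \<omega> then Yd Yp Z True \<omega> else Yd Yp Z False \<omega>)"

definition rhoG :: "'a measure \<Rightarrow> (bool \<Rightarrow> bool \<Rightarrow> 'a \<Rightarrow> real) \<Rightarrow> 'a set \<Rightarrow> bool \<Rightarrow> real" where
  "rhoG M Yp G d = cexp M (\<lambda>\<omega>. Yp d True \<omega> - Yp d False \<omega>) G"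

definition LATE :: "'a measure \<Rightarrow> (bool \<Rightarrow> 'a \<Rightarrow> bool) \<Rightarrow> (bool \<Rightarrow> bool \<Rightarrow> 'a \<Rightarrow> real) \<Rightarrow> ('a \<Rightarrow> bool) \<Rightarrow> real" where
  "LATE M Dp Yp Z = cexp M (\<lambda>\<omega>. Yd Yp Z True \<omega> - Yd Yp Z False \<omega>) (CP M Dp)"

definition obs_dist :: "'a measure \<Rightarrow> (bool \<Rightarrow> 'a \<Rightarrow> bool) \<Rightarrow> (bool \<Rightarrow> bool \<Rightarrow> 'a \<Rightarrow> real)
    \<Rightarrow> ('a \<Rightarrow> bool) \<Rightarrow> ('a \<Rightarrow> bool) \<Rightarrow> (real \<times> bool \<times> bool \<times> bool) measure" where
  "obs_dist M Dp Yp Z W =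
     distr M (borel \<Otimes>\<^sub>M count_space UNIV \<Otimes>\<^sub>M count_space UNIV \<Otimes>\<^sub>M count_space UNIV)
       (\<lambda>\<omega>. (Yobs Dp Yp Z \<omega>, Dobs Dp Z \<omega>, Z \<omega>, W \<omega>))"

text \<open>Conditional independence given the
  discrete variables (D_1,D_0) resp. W is written out in the elementary product form.\<close>
definition model :: "'a measure \<Rightarrow> (bool \<Rightarrow> 'a \<Rightarrow> bool) \<Rightarrow> (bool \<Rightarrow> bool \<Rightarrow> 'a \<Rightarrow> real)
    \<Rightarrow> ('a \<Rightarrow> bool) \<Rightarrow> ('a \<Rightarrow> bool) \<Rightarrow> (bool \<Rightarrow> real) \<Rightarrow> bool" where
  "model M Dp Yp Z W rho \<longleftrightarrow>
     prob_space M \<and>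
     (\<forall>z. Dp z \<in> measurable M (count_space UNIV)) \<and>
     Z \<in> measurable M (count_space UNIV) \<and> W \<in> measurable M (count_space UNIV) \<and>
     (\<forall>d z. Yp d z \<in> borel_measurable M \<and> integrable M (Yp d z)) \<and>
     \<comment> \<open>(i) homogeneous direct effects\<close>
     (\<forall>G \<in> {AT M Dp, NT M Dp, CP M Dp}. \<forall>d. rhoG M Yp G d = rho d) \<and>
     \<comment> \<open>(ii) monotonicity D_1 \<ge> D_0\<close>
     (\<forall>\<omega> \<in> space M. Dp False \<omega> \<longrightarrow> Dp True \<omega>) \<and>
     \<comment> \<open>(iii-a) (Z,W) independent of Y_{d,z} given (D_1,D_0)\<close>
     (\<forall>d z. \<forall>B \<in> sets borel. \<forall>a b g1 g0.
        measure M (ev M (\<lambda>\<omega>. Z \<omega> = a \<and> W \<omega> = b \<and> Yp d z \<omega> \<in> B \<and> Dp True \<omega> = g1 \<and> Dp False \<omega> = g0))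
          * measure M (ev M (\<lambda>\<omega>. Dp True \<omega> = g1 \<and> Dp False \<omega> = g0))
        = measure M (ev M (\<lambda>\<omega>. Z \<omega> = a \<and> W \<omega> = b \<and> Dp True \<omega> = g1 \<and> Dp False \<omega> = g0))
          * measure M (ev M (\<lambda>\<omega>. Yp d z \<omega> \<in> B \<and> Dp True \<omega> = g1 \<and> Dp False \<omega> = g0))) \<and>
     \<comment> \<open>(iii-b) Z independent of (D_1,D_0) given W\<close>
     (\<forall>a b g1 g0.
        measure M (ev M (\<lambda>\<omega>. Z \<omega> = a \<and> Dp True \<omega> = g1 \<and> Dp False \<omega> = g0 \<and> W \<omega> = b))
          * measure M (ev M (\<lambda>\<omega>. W \<omega> = b))
        = measure M (ev M (\<lambda>\<omega>. Z \<omega> = a \<and> W \<omega> = b))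
          * measure M (ev M (\<lambda>\<omega>. Dp True \<omega> = g1 \<and> Dp False \<omega> = g0 \<and> W \<omega> = b))) \<and>
     \<comment> \<open>(iv) compliers exist\<close>
     measure M (CP M Dp) > 0 \<and>
     \<comment> \<open>(v) full support of (Z,W)\<close>
     (\<forall>a b. 0 < measure M (ev M (\<lambda>\<omega>. Z \<omega> = a \<and> W \<omega> = b)) \<and>
            measure M (ev M (\<lambda>\<omega>. Z \<omega> = a \<and> W \<omega> = b)) < 1) \<and>
     \<comment> \<open>(vi) relevance of W\<close>
     (\<forall>G \<in> {AT M Dp, NT M Dp}.
        cprob M G (ev M (\<lambda>\<omega>. W \<omega>)) * cprob M (CP M Dp) (ev M (\<lambda>\<omega>. \<not> W \<omega>))
        \<noteq> cprob M G (ev M (\<lambda>\<omega>. \<not> W \<omega>)) * cprob M (CP M Dp) (ev M (\<lambda>\<omega>. W \<omega>)))"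

end

theory Submission
  imports Defs
begin

text \<open>Conditional independence turns every observed moment given (Z, W) = (a, b) into a mixture
  over the principal strata AT, NT, CP of (D_1, D_0): the mass of a stratum G in the cell is
  P(Z = a, W = b) P(G | W = b), and its mean outcome is E[Y_{d,a} | G]. By monotonicity the shares
  P(G | W = b) are identified from P(D = 1 | Z, W), and the contrasts over Z of E[Y D | Z, W = b]
  and E[Y (1 - D) | Z, W = b] equal
    P(AT | b) rho_1 + P(CP | b) E[Y_{1,1} | CP]   and   P(NT | b) rho_0 - P(CP | b) E[Y_{0,0} | CP].
  For b = 0, 1 these are two linear systems, nonsingular by condition (vi), so rho_1, rho_0,
  E[Y_{1,1} | CP] and E[Y_{0,0} | CP] are identified. Since the direct effects link E[Y_{d,0} | CP]
  to E[Y_{d,1} | CP], the LATE is a function of these and of observed weights.\<close>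

lemma integral_indicator_mult_cond_indep:
  fixes M :: "'a measure" and Y :: "'a \<Rightarrow> real"
  assumes "finite_measure M" and [measurable]: "S \<in> sets M" "T \<in> sets M" "Y \<in> borel_measurable M"
    and indep: "\<And>B. B \<in> sets borel \<Longrightarrow>
      measure M ({\<omega>\<in>space M. Y \<omega> \<in> B} \<inter> S) * measure M T
      = measure M S * measure M ({\<omega>\<in>space M. Y \<omega> \<in> B} \<inter> T)"
  shows "(\<integral>\<omega>. indicator S \<omega> * Y \<omega> \<partial>M) * measure M T
    = measure M S * (\<integral>\<omega>. indicator T \<omega> * Y \<omega> \<partial>M)"
proof -
  interpret finite_measure M by fact
  define f where "f \<omega> = measure M T * indicator S \<omega>" for \<omega>
  define g where "g \<omega> = measure M S * indicator T \<omega>" for \<omega>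
  have [measurable]: "f \<in> borel_measurable M" "g \<in> borel_measurable M"
    unfolding f_def g_def by simp_all
  have emeasure_density_eq: "emeasure (density M (\<lambda>\<omega>. ennreal (c * indicator A \<omega>))) (Y -` B \<inter> space M)
      = ennreal c * ennreal (measure M ({\<omega>\<in>space M. Y \<omega> \<in> B} \<inter> A))"
    if [measurable]: "A \<in> sets M" "B \<in> sets borel" and "0 \<le> c" for A B c
  proof -
    have "emeasure (density M (\<lambda>\<omega>. ennreal (c * indicator A \<omega>))) (Y -` B \<inter> space M)
        = (\<integral>\<^sup>+\<omega>. ennreal c * indicator ({\<omega>\<in>space M. Y \<omega> \<in> B} \<inter> A) \<omega> \<partial>M)"
      using \<open>0 \<le> c\<close> by (subst emeasure_density) (auto intro!: nn_integral_cong split: split_indicator)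
    then show ?thesis by (simp add: nn_integral_cmult_indicator emeasure_eq_measure)
  qed
  have same_law: "distr (density M f) borel Y = distr (density M g) borel Y"
  proof (rule measure_eqI)
    fix B :: "real set" assume "B \<in> sets (distr (density M f) borel Y)"
    then have [measurable]: "B \<in> sets borel" by simp
    have "ennreal (measure M T) * ennreal (measure M ({\<omega>\<in>space M. Y \<omega> \<in> B} \<inter> S))
        = ennreal (measure M S) * ennreal (measure M ({\<omega>\<in>space M. Y \<omega> \<in> B} \<inter> T))"
      using indep[of B] by (simp add: ennreal_mult'[symmetric] mult.commute)
    then show "emeasure (distr (density M f) borel Y) B = emeasure (distr (density M g) borel Y) B"
      unfolding f_def g_def by (simp add: emeasure_distr emeasure_density_eq)
  qed simp
  have "(\<integral>\<omega>. f \<omega> * Y \<omega> \<partial>M) = (\<integral>\<omega>. g \<omega> * Y \<omega> \<partial>M)"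
  proof -
    have "(\<integral>\<omega>. h \<omega> * Y \<omega> \<partial>M) = (\<integral>y. y \<partial>distr (density M h) borel Y)"
      if [measurable]: "h \<in> borel_measurable M" and "\<And>\<omega>. 0 \<le> h \<omega>" for h
      using that(2) by (subst integral_distr) (auto simp: integral_density)
    with same_law show ?thesis by (simp add: f_def g_def)
  qed
  then show ?thesis unfolding f_def g_def by (simp add: mult.assoc) (simp add: mult.commute)
qed

lemma integral_indicator_mult_null:
  fixes Y :: "'a \<Rightarrow> real"
  assumes "S \<in> null_sets M"
  shows "(\<integral>\<omega>. indicator S \<omega> * Y \<omega> \<partial>M) = 0"
  using AE_not_in[OF assms] by (intro integral_eq_zero_AE) (auto elim!: AE_mp)

lemma integrable_indicator_mult_real:
  fixes f :: "'a \<Rightarrow> real"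
  shows "A \<in> sets M \<Longrightarrow> integrable M f \<Longrightarrow> integrable M (\<lambda>x. indicator A x * f x)"
  using integrable_mult_indicator[of A M f] by simp

lemma integral_indicator_Un_mult:
  fixes Y :: "'a \<Rightarrow> real"
  assumes "A \<in> sets M" "B \<in> sets M" "A \<inter> B = {}" "integrable M Y"
  shows "(\<integral>\<omega>. indicator (A \<union> B) \<omega> * Y \<omega> \<partial>M)
    = (\<integral>\<omega>. indicator A \<omega> * Y \<omega> \<partial>M) + (\<integral>\<omega>. indicator B \<omega> * Y \<omega> \<partial>M)"
proof -
  have "(\<integral>\<omega>. indicator (A \<union> B) \<omega> * Y \<omega> \<partial>M) = (\<integral>\<omega>. indicator A \<omega> * Y \<omega> + indicator B \<omega> * Y \<omega> \<partial>M)"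
    using assms(3) by (intro Bochner_Integration.integral_cong) (auto split: split_indicator)
  also have "\<dots> = (\<integral>\<omega>. indicator A \<omega> * Y \<omega> \<partial>M) + (\<integral>\<omega>. indicator B \<omega> * Y \<omega> \<partial>M)"
    using assms by (intro Bochner_Integration.integral_add integrable_indicator_mult_real)
  finally show ?thesis .
qed

lemma cexp_diff:
  assumes "integrable M X" "integrable M Y" "A \<in> sets M"
  shows "cexp M (\<lambda>\<omega>. X \<omega> - Y \<omega>) A = cexp M X A - cexp M Y A"
proof -
  have "(\<integral>\<omega>. indicator A \<omega> * (X \<omega> - Y \<omega>) \<partial>M)
      = (\<integral>\<omega>. indicator A \<omega> * X \<omega> \<partial>M) - (\<integral>\<omega>. indicator A \<omega> * Y \<omega> \<partial>M)"
    unfolding right_diff_distrib using assms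
    by (intro Bochner_Integration.integral_diff integrable_indicator_mult_real)
  then show ?thesis unfolding cexp_def by (simp add: diff_divide_distrib)
qed

lemma ev_sets [measurable]: "Measurable.pred M P \<Longrightarrow> ev M P \<in> sets M"
  unfolding ev_def by measurable

lemma linear_system_2_unique:
  fixes a1 a0 b1 b0 x y x' y' :: "'a :: field"
  assumes "a1 * x + b1 * y = a1 * x' + b1 * y'" "a0 * x + b0 * y = a0 * x' + b0 * y'"
    and "a1 * b0 \<noteq> a0 * b1"
  shows "x = x' \<and> y = y'"
proof -
  have "(a1 * b0 - a0 * b1) * (x - x') = 0" "(a1 * b0 - a0 * b1) * (y - y') = 0"
    using arg_cong2[where f="\<lambda>u v. b0 * u - b1 * v", OF assms(1,2)]
      arg_cong2[where f="\<lambda>u v. a1 * v - a0 * u", OF assms(1,2)]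
    by (simp_all add: algebra_simps)
  then show ?thesis using assms(3) by simp
qed

type_synonym obs = "real \<times> bool \<times> bool \<times> bool"

abbreviation obs_space :: "obs measure" where
  "obs_space \<equiv> borel \<Otimes>\<^sub>M count_space UNIV \<Otimes>\<^sub>M count_space UNIV \<Otimes>\<^sub>M count_space UNIV"

text \<open>A point of obs is (Y, D, Z, W). Thus obs_cprob N d a b is P(D = d | Z = a, W = b) and
  obs_cmean N d a b is E[Y 1{D = d} | Z = a, W = b].\<close>

definition obs_zw_prob :: "obs measure \<Rightarrow> bool \<Rightarrow> bool \<Rightarrow> real" where
  "obs_zw_prob N a b = measure N (UNIV \<times> UNIV \<times> {a} \<times> {b})"

definition obs_cprob :: "obs measure \<Rightarrow> bool \<Rightarrow> bool \<Rightarrow> bool \<Rightarrow> real" where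
  "obs_cprob N d a b = measure N (UNIV \<times> {d} \<times> {a} \<times> {b}) / obs_zw_prob N a b"

definition obs_cmean :: "obs measure \<Rightarrow> bool \<Rightarrow> bool \<Rightarrow> bool \<Rightarrow> real" where
  "obs_cmean N d a b = (\<integral>x. indicator (UNIV \<times> {d} \<times> {a} \<times> {b}) x * fst x \<partial>N) / obs_zw_prob N a b"

text \<open>Under monotonicity, D = 1 given Z = 0 singles out the always takers and D = 0 given Z = 1
  the never takers; the compliers are the rest of D = 1 given Z = 1.\<close>

definition share_AT :: "obs measure \<Rightarrow> bool \<Rightarrow> real" where
  "share_AT N b = obs_cprob N True False b"

definition share_NT :: "obs measure \<Rightarrow> bool \<Rightarrow> real" where
  "share_NT N b = obs_cprob N False True b"

definition share_CP :: "obs measure \<Rightarrow> bool \<Rightarrow> real" where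
  "share_CP N b = obs_cprob N True True b - obs_cprob N True False b"

definition instrument_contrast :: "obs measure \<Rightarrow> bool \<Rightarrow> bool \<Rightarrow> real" where
  "instrument_contrast N d b = obs_cmean N d True b - obs_cmean N d False b"

text \<open>Here c1 and c0 stand for E[Y_{1,1} | CP] and E[Y_{0,0} | CP]. Compliers with Z = a
  contribute Y_{1,a} - Y_{0,a}, whose mean is c1 - c0 - rho_0 for a = 1 and c1 - c0 - rho_1 for
  a = 0; they carry the weight P(Z = a, W = b) P(CP | W = b).\<close>

definition late_formula :: "obs measure \<Rightarrow> real \<Rightarrow> real \<Rightarrow> real \<Rightarrow> real \<Rightarrow> real" where
  "late_formula N c1 c0 r1 r0 =
     (\<Sum>a\<in>UNIV. \<Sum>b\<in>UNIV. obs_zw_prob N a b * share_CP N b * (c1 - c0 - (if a then r0 else r1)))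
     / (\<Sum>a\<in>UNIV. \<Sum>b\<in>UNIV. obs_zw_prob N a b * share_CP N b)"

lemma sets_obs_space_events:
  "UNIV \<times> {d} \<times> {a} \<times> {b} \<in> sets obs_space" "UNIV \<times> UNIV \<times> {a} \<times> {b} \<in> sets obs_space"
  by (intro pair_measureI; simp)+

locale iv_model =
  fixes M :: "'a measure" and Dp :: "bool \<Rightarrow> 'a \<Rightarrow> bool" and Yp :: "bool \<Rightarrow> bool \<Rightarrow> 'a \<Rightarrow> real"
    and Z W :: "'a \<Rightarrow> bool" and rho :: "bool \<Rightarrow> real"
  assumes model: "model M Dp Yp Z W rho"
begin

sublocale prob_space M
  using model by (simp add: model_def)

lemma measurable_variables [measurable]:
  "Dp z \<in> measurable M (count_space UNIV)" "Z \<in> measurable M (count_space UNIV)"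
  "W \<in> measurable M (count_space UNIV)" "Yp d z \<in> borel_measurable M"
  using model by (simp_all add: model_def)

lemma integrable_Yp: "integrable M (Yp d z)"
  using model by (simp add: model_def)

lemma monotone: "\<omega> \<in> space M \<Longrightarrow> Dp False \<omega> \<Longrightarrow> Dp True \<omega>"
  using model by (simp add: model_def)

abbreviation obs_law :: "obs measure" where
  "obs_law \<equiv> obs_dist M Dp Yp Z W"

definition stratum :: "bool \<Rightarrow> bool \<Rightarrow> 'a set" where
  "stratum g1 g0 = ev M (\<lambda>\<omega>. Dp True \<omega> = g1 \<and> Dp False \<omega> = g0)"

definition cell :: "bool \<Rightarrow> bool \<Rightarrow> bool \<Rightarrow> bool \<Rightarrow> 'a set" where
  "cell a b g1 g0 = ev M (\<lambda>\<omega>. Z \<omega> = a \<and> W \<omega> = b \<and> Dp True \<omega> = g1 \<and> Dp False \<omega> = g0)"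

definition obs_event :: "bool \<Rightarrow> bool \<Rightarrow> bool \<Rightarrow> 'a set" where
  "obs_event d a b = ev M (\<lambda>\<omega>. Dobs Dp Z \<omega> = d \<and> Z \<omega> = a \<and> W \<omega> = b)"

definition zw_prob :: "bool \<Rightarrow> bool \<Rightarrow> real" where
  "zw_prob a b = measure M (ev M (\<lambda>\<omega>. Z \<omega> = a \<and> W \<omega> = b))"

definition stratum_share :: "bool \<Rightarrow> bool \<Rightarrow> bool \<Rightarrow> real" where
  "stratum_share b g1 g0 = cprob M (stratum g1 g0) (ev M (\<lambda>\<omega>. W \<omega> = b))"

definition stratum_mean :: "bool \<Rightarrow> bool \<Rightarrow> bool \<Rightarrow> bool \<Rightarrow> real" where
  "stratum_mean d z g1 g0 = cexp M (Yp d z) (stratum g1 g0)"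

lemma sets_stratum [measurable]: "stratum g1 g0 \<in> sets M"
  and sets_cell [measurable]: "cell a b g1 g0 \<in> sets M"
  unfolding stratum_def cell_def by measurable

lemma zw_prob_pos: "0 < zw_prob a b"
proof -
  have "\<forall>a b. 0 < prob (ev M (\<lambda>\<omega>. Z \<omega> = a \<and> W \<omega> = b)) \<and> prob (ev M (\<lambda>\<omega>. Z \<omega> = a \<and> W \<omega> = b)) < 1"
    using model unfolding model_def by (elim conjE) assumption
  then show ?thesis unfolding zw_prob_def by blast
qed

lemma prob_W_pos: "0 < prob (ev M (\<lambda>\<omega>. W \<omega> = b))"
proof -
  have "zw_prob True b \<le> prob (ev M (\<lambda>\<omega>. W \<omega> = b))"
    unfolding zw_prob_def by (rule finite_measure_mono) (auto simp: ev_def)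
  with zw_prob_pos[of True b] show ?thesis by simp
qed

lemma cond_indep_outcome:
  assumes "B \<in> sets borel"
  shows "prob ({\<omega>\<in>space M. Yp d z \<omega> \<in> B} \<inter> cell a b g1 g0) * prob (stratum g1 g0)
    = prob (cell a b g1 g0) * prob ({\<omega>\<in>space M. Yp d z \<omega> \<in> B} \<inter> stratum g1 g0)"
proof -
  have "prob (ev M (\<lambda>\<omega>. Z \<omega> = a \<and> W \<omega> = b \<and> Yp d z \<omega> \<in> B \<and> Dp True \<omega> = g1 \<and> Dp False \<omega> = g0))
        * prob (ev M (\<lambda>\<omega>. Dp True \<omega> = g1 \<and> Dp False \<omega> = g0))
      = prob (ev M (\<lambda>\<omega>. Z \<omega> = a \<and> W \<omega> = b \<and> Dp True \<omega> = g1 \<and> Dp False \<omega> = g0))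
        * prob (ev M (\<lambda>\<omega>. Yp d z \<omega> \<in> B \<and> Dp True \<omega> = g1 \<and> Dp False \<omega> = g0))"
    using model assms unfolding model_def by blast
  moreover have "ev M (\<lambda>\<omega>. Z \<omega> = a \<and> W \<omega> = b \<and> Yp d z \<omega> \<in> B \<and> Dp True \<omega> = g1 \<and> Dp False \<omega> = g0)
      = {\<omega>\<in>space M. Yp d z \<omega> \<in> B} \<inter> cell a b g1 g0"
    "ev M (\<lambda>\<omega>. Yp d z \<omega> \<in> B \<and> Dp True \<omega> = g1 \<and> Dp False \<omega> = g0)
      = {\<omega>\<in>space M. Yp d z \<omega> \<in> B} \<inter> stratum g1 g0"
    unfolding ev_def cell_def stratum_def by auto
  ultimately show ?thesis
    unfolding cell_def stratum_def by simp
qed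

lemma cond_indep_instrument:
  "prob (cell a b g1 g0) * prob (ev M (\<lambda>\<omega>. W \<omega> = b))
    = zw_prob a b * prob (stratum g1 g0 \<inter> ev M (\<lambda>\<omega>. W \<omega> = b))"
proof -
  have "prob (ev M (\<lambda>\<omega>. Z \<omega> = a \<and> Dp True \<omega> = g1 \<and> Dp False \<omega> = g0 \<and> W \<omega> = b))
        * prob (ev M (\<lambda>\<omega>. W \<omega> = b))
      = zw_prob a b * prob (ev M (\<lambda>\<omega>. Dp True \<omega> = g1 \<and> Dp False \<omega> = g0 \<and> W \<omega> = b))"
    using model unfolding model_def zw_prob_def by blast
  moreover have "ev M (\<lambda>\<omega>. Z \<omega> = a \<and> Dp True \<omega> = g1 \<and> Dp False \<omega> = g0 \<and> W \<omega> = b) = cell a b g1 g0"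
    "ev M (\<lambda>\<omega>. Dp True \<omega> = g1 \<and> Dp False \<omega> = g0 \<and> W \<omega> = b) = stratum g1 g0 \<inter> ev M (\<lambda>\<omega>. W \<omega> = b)"
    unfolding ev_def cell_def stratum_def by auto
  ultimately show ?thesis by simp
qed

lemma measure_cell: "prob (cell a b g1 g0) = zw_prob a b * stratum_share b g1 g0"
  using cond_indep_instrument[of a b g1 g0] prob_W_pos[of b]
  unfolding stratum_share_def cprob_def by (simp add: field_simps)

lemma integral_cell_eq_measure_mult:
  "(\<integral>\<omega>. indicator (cell a b g1 g0) \<omega> * Yp d z \<omega> \<partial>M) = prob (cell a b g1 g0) * stratum_mean d z g1 g0"
proof (cases "prob (stratum g1 g0) = 0")
  case True
  have "cell a b g1 g0 \<subseteq> stratum g1 g0"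
    unfolding cell_def stratum_def ev_def by auto
  then have "prob (cell a b g1 g0) = 0"
    using True finite_measure_mono[of "cell a b g1 g0" "stratum g1 g0"] measure_nonneg[of M "cell a b g1 g0"]
    by simp
  then show ?thesis
    by (simp add: integral_indicator_mult_null emeasure_eq_measure null_sets_def)
next
  case False
  have "(\<integral>\<omega>. indicator (cell a b g1 g0) \<omega> * Yp d z \<omega> \<partial>M) * prob (stratum g1 g0)
      = prob (cell a b g1 g0) * (\<integral>\<omega>. indicator (stratum g1 g0) \<omega> * Yp d z \<omega> \<partial>M)"
    by (rule integral_indicator_mult_cond_indep) (simp_all add: finite_measure_axioms cond_indep_outcome)
  then show ?thesis
    using False unfolding stratum_mean_def cexp_def by (simp add: field_simps)
qed

lemma integral_cell:
  "(\<integral>\<omega>. indicator (cell a b g1 g0) \<omega> * Yp d z \<omega> \<partial>M)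
    = zw_prob a b * stratum_share b g1 g0 * stratum_mean d z g1 g0"
  by (simp add: integral_cell_eq_measure_mult measure_cell)

lemma stratum_mean_diff:
  assumes "g0 \<longrightarrow> g1"
  shows "stratum_mean d True g1 g0 - stratum_mean d False g1 g0 = rho d"
proof -
  have "stratum g1 g0 \<in> {AT M Dp, NT M Dp, CP M Dp}"
    using assms by (cases g1; cases g0) (simp_all add: stratum_def AT_def NT_def CP_def)
  then have "rhoG M Yp (stratum g1 g0) d = rho d"
    using model unfolding model_def by blast
  then show ?thesis
    unfolding rhoG_def stratum_mean_def by (simp add: cexp_diff integrable_Yp)
qed

lemma measurable_observables [measurable]:
  "(\<lambda>\<omega>. (Yobs Dp Yp Z \<omega>, Dobs Dp Z \<omega>, Z \<omega>, W \<omega>)) \<in> measurable M obs_space"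
  unfolding Yobs_def Dobs_def Yd_def by measurable

lemma obs_zw_prob_eq: "obs_zw_prob obs_law a b = zw_prob a b"
  unfolding obs_zw_prob_def obs_dist_def zw_prob_def
  by (subst measure_distr[OF measurable_observables sets_obs_space_events(2)])
     (auto simp: ev_def intro!: arg_cong[where f=prob])

lemma obs_cprob_eq: "obs_cprob obs_law d a b = prob (obs_event d a b) / zw_prob a b"
  unfolding obs_cprob_def obs_zw_prob_eq unfolding obs_dist_def obs_event_def
  by (subst measure_distr[OF measurable_observables sets_obs_space_events(1)])
     (auto simp: ev_def intro!: arg_cong[where f=prob])

lemma obs_cmean_eq:
  "obs_cmean obs_law d a b = (\<integral>\<omega>. indicator (obs_event d a b) \<omega> * Yp d a \<omega> \<partial>M) / zw_prob a b"
proof -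
  have "(\<lambda>x. indicator (UNIV \<times> {d} \<times> {a} \<times> {b}) x * fst x) \<in> borel_measurable obs_space"
    using sets_obs_space_events(1) by measurable
  then show ?thesis
    unfolding obs_cmean_def obs_zw_prob_eq unfolding obs_dist_def
    by (subst integral_distr[OF measurable_observables])
     (auto simp: obs_event_def ev_def Yobs_def Yd_def Dobs_def split: split_indicator
       intro!: Bochner_Integration.integral_cong)
qed

lemma obs_event_eq_cells:
  "obs_event True False b = cell False b True True"
  "obs_event False True b = cell True b False False"
  "obs_event True True b = cell True b True True \<union> cell True b True False"
  "obs_event False False b = cell False b False False \<union> cell False b True False"
  unfolding obs_event_def cell_def ev_def Dobs_def by (auto dest: monotone)

lemma cells_disjoint: "(g1, g0) \<noteq> (g1', g0') \<Longrightarrow> cell a b g1 g0 \<inter> cell a b g1' g0' = {}"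
  unfolding cell_def ev_def by auto

lemma measure_cell_Un:
  "(g1, g0) \<noteq> (g1', g0') \<Longrightarrow>
    prob (cell a b g1 g0 \<union> cell a b g1' g0') = zw_prob a b * (stratum_share b g1 g0 + stratum_share b g1' g0')"
  by (simp add: finite_measure_Union cells_disjoint measure_cell distrib_left)

lemma integral_cell_Un:
  "(g1, g0) \<noteq> (g1', g0') \<Longrightarrow>
    (\<integral>\<omega>. indicator (cell a b g1 g0 \<union> cell a b g1' g0') \<omega> * Yp d z \<omega> \<partial>M)
    = zw_prob a b * (stratum_share b g1 g0 * stratum_mean d z g1 g0 + stratum_share b g1' g0' * stratum_mean d z g1' g0')"
  by (simp add: integral_indicator_Un_mult cells_disjoint integrable_Yp integral_cell distrib_left)

lemma share_AT_eq: "share_AT obs_law b = stratum_share b True True"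
  using zw_prob_pos[of False b]
  by (simp add: share_AT_def obs_cprob_eq obs_event_eq_cells measure_cell)

lemma share_NT_eq: "share_NT obs_law b = stratum_share b False False"
  using zw_prob_pos[of True b]
  by (simp add: share_NT_def obs_cprob_eq obs_event_eq_cells measure_cell)

lemma share_CP_eq: "share_CP obs_law b = stratum_share b True False"
  using zw_prob_pos[of True b] zw_prob_pos[of False b]
  by (simp add: share_CP_def obs_cprob_eq obs_event_eq_cells measure_cell measure_cell_Un)

lemma obs_cmean_eq_strata:
  "obs_cmean obs_law True False b = stratum_share b True True * stratum_mean True False True True"
  "obs_cmean obs_law False True b = stratum_share b False False * stratum_mean False True False False"
  "obs_cmean obs_law True True b
    = stratum_share b True True * stratum_mean True True True True
      + stratum_share b True False * stratum_mean True True True False"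
  "obs_cmean obs_law False False b
    = stratum_share b False False * stratum_mean False False False False
      + stratum_share b True False * stratum_mean False False True False"
  using zw_prob_pos[of True b] zw_prob_pos[of False b]
  by (simp_all add: obs_cmean_eq obs_event_eq_cells integral_cell integral_cell_Un)

lemma instrument_contrast_treated:
  "instrument_contrast obs_law True b
    = share_AT obs_law b * rho True + share_CP obs_law b * stratum_mean True True True False"
  using stratum_mean_diff[of True True True]
  by (simp add: instrument_contrast_def obs_cmean_eq_strata share_AT_eq share_CP_eq algebra_simps)

lemma instrument_contrast_untreated:
  "instrument_contrast obs_law False b
    = share_NT obs_law b * rho False - share_CP obs_law b * stratum_mean False False True False"
  using stratum_mean_diff[of False False False]
  by (simp add: instrument_contrast_def obs_cmean_eq_strata share_NT_eq share_CP_eq algebra_simps)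

lemma share_determinant_nonzero:
  "share_AT obs_law True * share_CP obs_law False \<noteq> share_AT obs_law False * share_CP obs_law True"
  "share_NT obs_law True * share_CP obs_law False \<noteq> share_NT obs_law False * share_CP obs_law True"
proof -
  have "stratum True True = AT M Dp" "stratum False False = NT M Dp" "stratum True False = CP M Dp"
    unfolding stratum_def AT_def NT_def CP_def by simp_all
  moreover have "ev M (\<lambda>\<omega>. W \<omega> = True) = ev M W" "ev M (\<lambda>\<omega>. W \<omega> = False) = ev M (\<lambda>\<omega>. \<not> W \<omega>)"
    by simp_all
  ultimately show
    "share_AT obs_law True * share_CP obs_law False \<noteq> share_AT obs_law False * share_CP obs_law True"
    "share_NT obs_law True * share_CP obs_law False \<noteq> share_NT obs_law False * share_CP obs_law True"
    using model unfolding model_def share_AT_eq share_NT_eq share_CP_eq stratum_share_def by auto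
qed

lemma complier_effect_given_instrument:
  "stratum_mean True a True False - stratum_mean False a True False
    = stratum_mean True True True False - stratum_mean False False True False - (if a then rho False else rho True)"
  using stratum_mean_diff[of False True True] stratum_mean_diff[of False True False]
  by (cases a) simp_all

lemma indicator_CP_eq_sum_cells:
  "\<omega> \<in> space M \<Longrightarrow> indicator (CP M Dp) \<omega> = (\<Sum>a\<in>UNIV. \<Sum>b\<in>UNIV. indicator (cell a b True False) \<omega> :: real)"
  by (cases "Z \<omega>"; cases "W \<omega>") (simp_all add: UNIV_bool CP_def cell_def ev_def indicator_def)

lemma LATE_eq:
  "LATE M Dp Yp Z = late_formula obs_law (stratum_mean True True True False) (stratum_mean False False True False)
    (rho True) (rho False)"
proof -
  let ?cp = "\<lambda>a b. cell a b True False"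
  have integral_double_sum: "(\<integral>\<omega>. (\<Sum>a\<in>A. \<Sum>b\<in>B. f a b \<omega>) \<partial>M) = (\<Sum>a\<in>A. \<Sum>b\<in>B. \<integral>\<omega>. f a b \<omega> \<partial>M)"
    if "\<And>a b. integrable M (f a b)" for A B and f :: "bool \<Rightarrow> bool \<Rightarrow> 'a \<Rightarrow> real"
    using that by (simp add: integrable_sum)
  have "(\<integral>\<omega>. indicator (CP M Dp) \<omega> * (Yd Yp Z True \<omega> - Yd Yp Z False \<omega>) \<partial>M)
      = (\<integral>\<omega>. (\<Sum>a\<in>UNIV. \<Sum>b\<in>UNIV. indicator (?cp a b) \<omega> * Yp True a \<omega> - indicator (?cp a b) \<omega> * Yp False a \<omega>) \<partial>M)"
  proof (rule Bochner_Integration.integral_cong[OF refl])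
    fix \<omega> assume "\<omega> \<in> space M"
    then show "indicator (CP M Dp) \<omega> * (Yd Yp Z True \<omega> - Yd Yp Z False \<omega>)
        = (\<Sum>a\<in>UNIV. \<Sum>b\<in>UNIV. indicator (?cp a b) \<omega> * Yp True a \<omega> - indicator (?cp a b) \<omega> * Yp False a \<omega>)"
      by (cases "Z \<omega>"; cases "W \<omega>") (simp_all add: UNIV_bool CP_def cell_def ev_def Yd_def indicator_def)
  qed
  also have "\<dots> = (\<Sum>a\<in>UNIV. \<Sum>b\<in>UNIV.
      \<integral>\<omega>. indicator (?cp a b) \<omega> * Yp True a \<omega> - indicator (?cp a b) \<omega> * Yp False a \<omega> \<partial>M)"
    by (rule integral_double_sum) (simp add: integrable_indicator_mult_real integrable_Yp)
  also have "\<dots> = (\<Sum>a\<in>UNIV. \<Sum>b\<in>UNIV. zw_prob a b * share_CP obs_law b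
      * (stratum_mean True True True False - stratum_mean False False True False - (if a then rho False else rho True)))"
    by (simp add: Bochner_Integration.integral_diff integrable_indicator_mult_real integrable_Yp
        integral_cell share_CP_eq right_diff_distrib flip: complier_effect_given_instrument)
  finally have numerator: "(\<integral>\<omega>. indicator (CP M Dp) \<omega> * (Yd Yp Z True \<omega> - Yd Yp Z False \<omega>) \<partial>M) = \<dots>" .
  have "prob (CP M Dp) = (\<integral>\<omega>. (\<Sum>a\<in>UNIV. \<Sum>b\<in>UNIV. indicator (?cp a b) \<omega>) \<partial>M)"
    by (simp add: CP_def flip: indicator_CP_eq_sum_cells cong: Bochner_Integration.integral_cong)
  also have "\<dots> = (\<Sum>a\<in>UNIV. \<Sum>b\<in>UNIV. zw_prob a b * share_CP obs_law b)"
    by (subst integral_double_sum) (simp_all add: measure_cell share_CP_eq emeasure_eq_measure)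
  finally have denominator: "prob (CP M Dp) = \<dots>" .
  show ?thesis
    unfolding LATE_def cexp_def late_formula_def numerator denominator obs_zw_prob_eq ..
qed

lemma treated_equations_unique:
  assumes "\<And>b. instrument_contrast obs_law True b = share_AT obs_law b * r + share_CP obs_law b * c"
  shows "rho True = r \<and> stratum_mean True True True False = c"
  using assms[of True] assms[of False]
  by (intro linear_system_2_unique[OF _ _ share_determinant_nonzero(1)]) (simp_all add: instrument_contrast_treated)

lemma untreated_equations_unique:
  assumes "\<And>b. instrument_contrast obs_law False b = share_NT obs_law b * r - share_CP obs_law b * c"
  shows "rho False = r \<and> stratum_mean False False True False = c"
proof -
  have "rho False = r \<and> - stratum_mean False False True False = - c"
    using assms[of True] assms[of False]
    by (intro linear_system_2_unique[OF _ _ share_determinant_nonzero(2)]) (simp_all add: instrument_contrast_untreated)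
  then show ?thesis by simp
qed

end

theorem theorem1:
  fixes M :: "'a measure" and Dp :: "bool \<Rightarrow> 'a \<Rightarrow> bool" and Yp :: "bool \<Rightarrow> bool \<Rightarrow> 'a \<Rightarrow> real"
    and Z W :: "'a \<Rightarrow> bool" and rho :: "bool \<Rightarrow> real"
    and M' :: "'b measure" and Dp' :: "bool \<Rightarrow> 'b \<Rightarrow> bool" and Yp' :: "bool \<Rightarrow> bool \<Rightarrow> 'b \<Rightarrow> real"
    and Z' W' :: "'b \<Rightarrow> bool" and rho' :: "bool \<Rightarrow> real"
  assumes "model M Dp Yp Z W rho"
    and "model M' Dp' Yp' Z' W' rho'"
    and "obs_dist M Dp Yp Z W = obs_dist M' Dp' Yp' Z' W'"
  shows "rho True = rho' True \<and> rho False = rho' False \<and> LATE M Dp Yp Z = LATE M' Dp' Yp' Z'"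
proof -
  interpret A: iv_model M Dp Yp Z W rho by unfold_locales fact
  interpret B: iv_model M' Dp' Yp' Z' W' rho' by unfold_locales fact
  note same_law = assms(3)[symmetric]
  have treated: "rho True = rho' True \<and> A.stratum_mean True True True False = B.stratum_mean True True True False"
    by (rule A.treated_equations_unique[OF B.instrument_contrast_treated[unfolded same_law]])
  have untreated: "rho False = rho' False \<and> A.stratum_mean False False True False = B.stratum_mean False False True False"
    by (rule A.untreated_equations_unique[OF B.instrument_contrast_untreated[unfolded same_law]])
  show ?thesis
    using treated untreated by (simp add: A.LATE_eq B.LATE_eq[unfolded same_law])
qed

end
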